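(* Let $H_{KR}=[h_1\cdots h_{51}]=[I_{10}\ M_{KR}]$ be the $10\times 51$ binary matrix, where $I_{10}$ is the identity matrix (so $h_i$ is the $i$-th unit vector for $i\le10$) and $h_{11},\dots,h_{51}$ are, in order, the columns of $M_{KR}$ given in hexadecimal as 1B6, 193, 1CC, 187, 1F6, F7, 16E, 140, 3C, 296, 22F, 303, 381, 365, 11D, 1A3, 274, 2F2, 254, 56, F, 41, 357, 208, 34, 329, 28D, 31D, 3D5, 129, 3D7, B7, 3EC, 2E2, 23C, AD, 34E, 155, 2E6, 371, D4 (each hexadecimal number written as a 10-bit binary string, most significant bit as the top entry; e.g. 1B6 $=(0,1,1,0,1,1,0,1,1,0)^T$). Let $\mathcal P_{KR}$ be the partition of the column indices into the 11 subsets $\{5,13,43\}$, $\{20,27\}$, $\{3,29,33,39,41,48,51\}$, $\{1,7,19,25,34,45\}$, $\{2,4,18\}$, $\{6,8,12,26,28,35,44\}$, $\{9,22,23,30\}$, $\{10,11,15,16,32,42\}$, $\{14,24,49,50\}$, $\{17,21,31,37,46,47\}$, $\{36,38,40\}$. Then (i) $\mathcal P_{KR}$ is a $2$-partition of $H_{KR}$: every nonzero vector of $\mathbb{F}_2^{10}$ is a column of $H_{KR}$ or the sum of two columns of $H_{KR}$ lying in distinct subsets of $\mathcal P_{KR}$; (ii) the code with parity-check matrix $H_{KR}$ has minimum distance $3$, and $h_5+h_{27}+h_{29}=0$, where $h_5,h_{27},h_{29}$ lie in three distinct subsets of $\mathcal P_{KR}$.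
   Context: For an $r\times n$ parity-check matrix $H$ of a binary code of covering radius $2$ and minimum distance $\ge3$, a $2$-partition is a partition of the column set of $H$ into nonempty subsets such that every vector of $\mathbb{F}_2^r$ is the sum of at most $2$ columns of $H$ lying in pairwise distinct subsets (the zero vector being the empty sum). *)

theory Defs
  imports Main
begin

text \<open>Binary vectors of \<open>F_2^r\<close> are modelled as functions \<open>nat \<Rightarrow> bool\<close>
  whose support lies in the coordinate set \<open>{1..r}\<close> (True = 1, False = 0).
  A binary \<open>r \<times> n\<close> matrix is given by its columns \<open>h i\<close>, \<open>i \<in> {1..n}\<close>,
  where \<open>h i j\<close> is the entry in row \<open>j\<close> of column \<open>i\<close>.\<close>

definition bvecs :: "nat \<Rightarrow> (nat \<Rightarrow> bool) set" where
  "bvecs r = {v. \<forall>j. v j \<longrightarrow> j \<in> {1..r}}"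

definition bzero :: "nat \<Rightarrow> bool" where
  "bzero = (\<lambda>_. False)"

definition colsum :: "(nat \<Rightarrow> nat \<Rightarrow> bool) \<Rightarrow> nat set \<Rightarrow> (nat \<Rightarrow> bool)" where
  "colsum h S = (\<lambda>j. odd (card {i \<in> S. h i j}))"

definition is_partition :: "nat set set \<Rightarrow> nat set \<Rightarrow> bool" where
  "is_partition P A \<longleftrightarrow> (\<forall>B\<in>P. B \<noteq> {}) \<and> \<Union>P = A \<and>
     (\<forall>B\<in>P. \<forall>C\<in>P. B \<noteq> C \<longrightarrow> B \<inter> C = {})"

definition same_block :: "nat set set \<Rightarrow> nat \<Rightarrow> nat \<Rightarrow> bool" where
  "same_block P a b \<longleftrightarrow> (\<exists>B\<in>P. a \<in> B \<and> b \<in> B)"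

definition two_partition :: "nat \<Rightarrow> nat \<Rightarrow> (nat \<Rightarrow> nat \<Rightarrow> bool) \<Rightarrow> nat set set \<Rightarrow> bool" where
  "two_partition r n h P \<longleftrightarrow> is_partition P {1..n} \<and>
     (\<forall>v \<in> bvecs r. \<exists>S. S \<subseteq> {1..n} \<and> card S \<le> 2 \<and> colsum h S = v \<and>
        (\<forall>a\<in>S. \<forall>b\<in>S. a \<noteq> b \<longrightarrow> \<not> same_block P a b))"

definition code :: "nat \<Rightarrow> (nat \<Rightarrow> nat \<Rightarrow> bool) \<Rightarrow> (nat \<Rightarrow> bool) set" where
  "code n h = {x \<in> bvecs n. colsum h {i. x i} = bzero}"

definition hamming_dist :: "(nat \<Rightarrow> bool) \<Rightarrow> (nat \<Rightarrow> bool) \<Rightarrow> nat" where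
  "hamming_dist x y = card {i. x i \<noteq> y i}"

definition min_distance :: "nat \<Rightarrow> (nat \<Rightarrow> nat \<Rightarrow> bool) \<Rightarrow> nat" where
  "min_distance n h = Min {hamming_dist x y | x y. x \<in> code n h \<and> y \<in> code n h \<and> x \<noteq> y}"

definition M_KR :: "nat list" where
  "M_KR = [0x1B6, 0x193, 0x1CC, 0x187, 0x1F6, 0xF7, 0x16E, 0x140, 0x3C, 0x296,
           0x22F, 0x303, 0x381, 0x365, 0x11D, 0x1A3, 0x274, 0x2F2, 0x254, 0x56,
           0xF, 0x41, 0x357, 0x208, 0x34, 0x329, 0x28D, 0x31D, 0x3D5, 0x129,
           0x3D7, 0xB7, 0x3EC, 0x2E2, 0x23C, 0xAD, 0x34E, 0x155, 0x2E6, 0x371, 0xD4]"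

text \<open>\<open>H_KR = [I_10 M_KR]\<close>; row \<open>j \<in> {1..10}\<close>, row 1 is the most significant bit.\<close>
definition H_KR :: "nat \<Rightarrow> nat \<Rightarrow> bool" where
  "H_KR i j = (j \<in> {1..10} \<and>
     (if i \<le> 10 then i = j else bit (M_KR ! (i - 11)) (10 - j)))"

definition P_KR :: "nat set set" where
  "P_KR = {{5,13,43}, {20,27}, {3,29,33,39,41,48,51}, {1,7,19,25,34,45}, {2,4,18},
           {6,8,12,26,28,35,44}, {9,22,23,30}, {10,11,15,16,32,42}, {14,24,49,50},
           {17,21,31,37,46,47}, {36,38,40}}"

end

theory Submission
  imports Defs
begin

text \<open>The columns of \<open>H_KR\<close> are nonzero and pairwise distinct, so no nonzero codeword has weight
  at most 2, while \<open>h\<^sub>5 + h\<^sub>2\<^sub>7 + h\<^sub>2\<^sub>9 = 0\<close> gives one of weight 3. Identifying a vector of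
  \<open>F_2^10\<close> with the number whose binary digits are its entries turns column sums into bitwise
  XOR, so the 2-partition property becomes a finite check: a table lists, for each of the 1024
  numbers, at most two columns in distinct blocks whose XOR it is.\<close>

lemma colsum_empty: "colsum h {} = bzero"
  by (simp add: colsum_def bzero_def)

lemma colsum_insert:
  assumes "finite S" "a \<notin> S"
  shows "colsum h (insert a S) = (\<lambda>j. h a j \<noteq> colsum h S j)"
proof
  fix j
  have "{i \<in> insert a S. h i j} = (if h a j then insert a {i \<in> S. h i j} else {i \<in> S. h i j})"
    by auto
  then show "colsum h (insert a S) j = (h a j \<noteq> colsum h S j)"
    using assms by (simp add: colsum_def)
qed

lemma colsum_singleton: "colsum h {a} = h a"
  using colsum_insert[of "{}" a h] by (simp add: colsum_empty bzero_def)

lemma odd_card_sym_diff: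
  assumes "finite A" "finite B"
  shows "odd (card (sym_diff A B)) \<longleftrightarrow> odd (card A) \<noteq> odd (card B)"
proof -
  have "card A = card (A - B) + card (A \<inter> B)" "card B = card (B - A) + card (A \<inter> B)"
    using assms card_Int_Diff[of A B] card_Int_Diff[of B A] by (simp_all add: Int_commute)
  moreover have "card (sym_diff A B) = card (A - B) + card (B - A)"
    using assms by (intro card_Un_disjoint) auto
  ultimately show ?thesis by presburger
qed

lemma colsum_sym_diff:
  assumes "finite A" "finite B"
  shows "colsum h (sym_diff A B) = (\<lambda>j. colsum h A j \<noteq> colsum h B j)"
proof
  fix j
  have "{i \<in> sym_diff A B. h i j} = sym_diff {i \<in> A. h i j} {i \<in> B. h i j}"
    by auto
  then show "colsum h (sym_diff A B) j = (colsum h A j \<noteq> colsum h B j)"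
    using assms by (simp add: colsum_def odd_card_sym_diff)
qed

section \<open>Minimum distance\<close>

lemma colsum_code_diff:
  assumes "x \<in> code n h" "y \<in> code n h"
  shows "colsum h {i. x i \<noteq> y i} = bzero"
proof -
  have fin: "finite {i. x i}" "finite {i. y i}"
    using assms by (auto simp: code_def bvecs_def intro: finite_subset[of _ "{1..n}"])
  have "{i. x i \<noteq> y i} = sym_diff {i. x i} {i. y i}"
    by auto
  then show ?thesis
    using assms colsum_sym_diff[OF fin, of h] by (simp add: code_def bzero_def)
qed

lemma colsum_ne_bzero_if_card_le_2:
  assumes "inj_on h A" "\<And>a. a \<in> A \<Longrightarrow> h a \<noteq> bzero"
    and "D \<subseteq> A" "finite D" "D \<noteq> {}" "card D \<le> 2"
  shows "colsum h D \<noteq> bzero"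
proof -
  have "card D = 1 \<or> card D = 2"
    using assms(4-6) by (simp add: le_Suc_eq numeral_2_eq_2)
  then consider a where "D = {a}" | a b where "D = {a, b}" "a \<noteq> b"
    by (metis card_1_singletonE card_2_iff)
  then show ?thesis
  proof cases
    case (1 a)
    then show ?thesis
      using assms(2,3) by (simp add: colsum_singleton)
  next
    case (2 a b)
    then have "colsum h D = (\<lambda>j. h a j \<noteq> h b j)"
      by (simp add: colsum_insert colsum_singleton)
    moreover have "h a \<noteq> h b"
      using 2 assms(1,3) by (auto dest: inj_onD)
    ultimately show ?thesis
      by (auto simp: bzero_def fun_eq_iff)
  qed
qed

lemma three_le_hamming_dist:
  assumes "inj_on h {1..n}" "\<And>a. a \<in> {1..n} \<Longrightarrow> h a \<noteq> bzero"
    and "x \<in> code n h" "y \<in> code n h" "x \<noteq> y"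
  shows "3 \<le> hamming_dist x y"
proof (rule ccontr)
  let ?D = "{i. x i \<noteq> y i}"
  assume "\<not> 3 \<le> hamming_dist x y"
  then have "card ?D \<le> 2"
    by (simp add: hamming_dist_def)
  moreover have "?D \<subseteq> {1..n}"
    using assms(3,4) by (auto simp: code_def bvecs_def)
  moreover have "?D \<noteq> {}"
    using assms(5) by auto
  ultimately have "colsum h ?D \<noteq> bzero"
    using assms(1,2) by (intro colsum_ne_bzero_if_card_le_2) (auto intro: finite_subset)
  then show False
    using colsum_code_diff[OF assms(3,4)] by blast
qed

lemma min_distance_eq_3:
  assumes "inj_on h {1..n}" "\<And>a. a \<in> {1..n} \<Longrightarrow> h a \<noteq> bzero"
    and "C \<subseteq> {1..n}" "card C = 3" "colsum h C = bzero"
  shows "min_distance n h = 3"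
  unfolding min_distance_def
proof (rule Min_eqI)
  let ?dists = "{hamming_dist x y |x y. x \<in> code n h \<and> y \<in> code n h \<and> x \<noteq> y}"
  have "hamming_dist x y \<le> n" if "x \<in> code n h" "y \<in> code n h" for x y
  proof -
    have "{i. x i \<noteq> y i} \<subseteq> {1..n}"
      using that by (auto simp: code_def bvecs_def)
    then show ?thesis
      unfolding hamming_dist_def using card_mono[of "{1..n}"] by fastforce
  qed
  then have "?dists \<subseteq> {..n}"
    by auto
  then show "finite ?dists"
    using finite_subset by blast
  show "3 \<le> d" if "d \<in> ?dists" for d
    using that three_le_hamming_dist[OF assms(1,2)] by blast
  let ?x = "\<lambda>i. i \<in> C"
  have "?x \<in> code n h"
    using assms(3,5) by (auto simp: code_def bvecs_def)
  moreover have "bzero \<in> code n h"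
    using colsum_empty[of h] by (simp add: code_def bvecs_def bzero_def)
  moreover have "?x \<noteq> bzero" "hamming_dist ?x bzero = 3"
    using assms(4) by (auto simp: bzero_def hamming_dist_def fun_eq_iff)
  ultimately show "3 \<in> ?dists"
    by force
qed

section \<open>Vectors as binary numbers\<close>

definition bin_vec :: "nat \<Rightarrow> nat \<Rightarrow> nat \<Rightarrow> bool" where
  "bin_vec r m = (\<lambda>j. j \<in> {1..r} \<and> bit m (r - j))"

lemma bin_vec_0: "bin_vec r 0 = bzero"
  by (simp add: bin_vec_def bzero_def)

lemma bin_vec_xor: "bin_vec r (xor m k) = (\<lambda>j. bin_vec r m j \<noteq> bin_vec r k j)"
  by (auto simp: bin_vec_def bit_xor_iff)

lemma bin_vec_in_bvecs: "bin_vec r m \<in> bvecs r"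
  by (simp add: bin_vec_def bvecs_def)

lemma inj_on_bin_vec: "inj_on (bin_vec r) {..<2 ^ r}"
proof
  fix m k :: nat
  assume "m \<in> {..<2 ^ r}" "k \<in> {..<2 ^ r}" and eq: "bin_vec r m = bin_vec r k"
  then have "take_bit r m = m" "take_bit r k = k"
    by (simp_all add: take_bit_nat_eq_self_iff)
  moreover have "bit m i = bit k i" if "i < r" for i
  proof -
    have "r - i \<in> {1..r}" "r - (r - i) = i"
      using that by auto
    then show ?thesis
      using fun_cong[OF eq, of "r - i"] by (simp add: bin_vec_def)
  qed
  ultimately show "m = k"
    by (metis bit_eq_iff bit_take_bit_iff)
qed

lemma card_bvecs: "card (bvecs r) = 2 ^ r"
proof -
  have "v \<in> (\<lambda>S j. j \<in> S) ` Pow {1..r}" if "v \<in> bvecs r" for v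
    using that by (intro image_eqI[of v _ "{j. v j}"]) (auto simp: bvecs_def)
  then have "bvecs r = (\<lambda>S j. j \<in> S) ` Pow {1..r}"
    by (auto simp: bvecs_def)
  moreover have "inj_on (\<lambda>S j. j \<in> S) (Pow {1..r})"
    by (auto simp: inj_on_def fun_eq_iff)
  ultimately show ?thesis
    by (simp add: card_image card_Pow)
qed

lemma bin_vec_image: "bin_vec r ` {..<2 ^ r} = bvecs r"
proof (rule card_subset_eq)
  show "finite (bvecs r)"
    by (rule card_ge_0_finite) (simp add: card_bvecs)
  show "bin_vec r ` {..<2 ^ r} \<subseteq> bvecs r"
    using bin_vec_in_bvecs by blast
  show "card (bin_vec r ` {..<2 ^ r}) = card (bvecs r)"
    by (simp add: card_image inj_on_bin_vec card_bvecs)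
qed

lemma colsum_set_eq_bin_vec:
  assumes "distinct ws" "\<And>a. a \<in> set ws \<Longrightarrow> h a = bin_vec r (col a)"
  shows "colsum h (set ws) = bin_vec r (foldr (\<lambda>a. xor (col a)) ws 0)"
  using assms by (induction ws) (simp_all add: colsum_empty bin_vec_0 colsum_insert bin_vec_xor)

section \<open>2-partitions from a table of witnesses\<close>

definition partition_witness ::
    "nat \<Rightarrow> (nat \<Rightarrow> nat) \<Rightarrow> (nat \<Rightarrow> nat) \<Rightarrow> nat \<Rightarrow> nat list \<Rightarrow> bool" where
  "partition_witness n col label m ws \<longleftrightarrow> length ws \<le> 2 \<and> set ws \<subseteq> {1..n} \<and>
     distinct (map label ws) \<and> foldr (\<lambda>a. xor (col a)) ws 0 = m"

lemma two_partition_from_witnesses: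
  assumes "is_partition P {1..n}"
    and cols: "\<And>a. a \<in> {1..n} \<Longrightarrow> h a = bin_vec r (col a)"
    and labels: "\<And>a b. same_block P a b \<Longrightarrow> label a = label b"
    and witnesses: "\<And>m. m < 2 ^ r \<Longrightarrow> \<exists>ws. partition_witness n col label m ws"
  shows "two_partition r n h P"
  unfolding two_partition_def
proof (intro conjI ballI assms(1))
  fix v
  assume "v \<in> bvecs r"
  then obtain m where "m < 2 ^ r" and v: "v = bin_vec r m"
    using bin_vec_image by (metis imageE lessThan_iff)
  then obtain ws where ws: "partition_witness n col label m ws"
    using witnesses by blast
  then have "distinct ws" and inj: "inj_on label (set ws)" and sub: "set ws \<subseteq> {1..n}"
    by (auto simp: partition_witness_def distinct_map)
  have "card (set ws) \<le> 2"
    using ws card_length[of ws] by (simp add: partition_witness_def)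
  moreover have "colsum h (set ws) = v"
  proof -
    have "h a = bin_vec r (col a)" if "a \<in> set ws" for a
      using that sub cols by blast
    then show ?thesis
      using colsum_set_eq_bin_vec[OF \<open>distinct ws\<close>] ws v by (simp add: partition_witness_def)
  qed
  moreover have "\<not> same_block P a b" if "a \<in> set ws" "b \<in> set ws" "a \<noteq> b" for a b
    using that inj labels by (auto dest: inj_onD)
  ultimately show "\<exists>S. S \<subseteq> {1..n} \<and> card S \<le> 2 \<and> colsum h S = v \<and>
      (\<forall>a\<in>S. \<forall>b\<in>S. a \<noteq> b \<longrightarrow> \<not> same_block P a b)"
    using sub by blast
qed

fun witnesses_for_range :: "(nat \<Rightarrow> 'a \<Rightarrow> bool) \<Rightarrow> nat \<Rightarrow> nat \<Rightarrow> 'a list \<Rightarrow> bool" where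
  "witnesses_for_range ok m n [] \<longleftrightarrow> m = n"
| "witnesses_for_range ok m n (w # ws) \<longleftrightarrow> ok m w \<and> witnesses_for_range ok (m + 1) n ws"

lemma witnesses_for_range_append:
  "witnesses_for_range ok l m vs \<Longrightarrow> witnesses_for_range ok m n ws \<Longrightarrow>
     witnesses_for_range ok l n (vs @ ws)"
  by (induction vs arbitrary: l) auto

lemma witnesses_for_range_exists:
  "witnesses_for_range ok m n ws \<Longrightarrow> m \<le> k \<Longrightarrow> k < n \<Longrightarrow> \<exists>w. ok k w"
proof (induction ws arbitrary: m)
  case (Cons w ws)
  then show ?case
    by (cases "k = m") auto
qed simp

definition KR_col :: "nat \<Rightarrow> nat" where
  "KR_col a = (if a \<le> 10 then 2 ^ (10 - a) else M_KR ! (a - 11))"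

lemma H_KR_eq_bin_vec:
  assumes "a \<in> {1..51}"
  shows "H_KR a = bin_vec 10 (KR_col a)"
proof
  fix j
  show "H_KR a j = bin_vec 10 (KR_col a) j"
  proof (cases "a \<le> 10")
    case True
    then have "j \<in> {1..10} \<Longrightarrow> 10 - j = 10 - a \<longleftrightarrow> a = j"
      using assms by auto
    with True show ?thesis
      by (auto simp: H_KR_def bin_vec_def KR_col_def bit_exp_iff)
  next
    case False
    then show ?thesis
      by (simp add: H_KR_def bin_vec_def KR_col_def)
  qed
qed

lemma inj_on_KR_col: "inj_on KR_col {1..51}"
proof -
  have "distinct (map KR_col [1..<52])"
    by (simp add: KR_col_def M_KR_def upt_rec)
  moreover have "set [1..<52] = {1..51}"
    by auto
  ultimately show ?thesis
    by (metis distinct_map)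
qed

lemma KR_col_bounds:
  assumes "a \<in> {1..51}"
  shows "0 < KR_col a \<and> KR_col a < 2 ^ 10"
proof -
  have "list_all (\<lambda>a. 0 < KR_col a \<and> KR_col a < 2 ^ 10) [1..<52]"
    by (simp add: KR_col_def M_KR_def upt_rec)
  then show ?thesis
    using assms by (auto simp: list_all_iff)
qed

lemma inj_on_H_KR: "inj_on H_KR {1..51}"
proof
  fix a b :: nat
  assume a: "a \<in> {1..51}" and b: "b \<in> {1..51}" and "H_KR a = H_KR b"
  then have "bin_vec 10 (KR_col a) = bin_vec 10 (KR_col b)"
    by (simp add: H_KR_eq_bin_vec)
  moreover have "KR_col a < 2 ^ 10" "KR_col b < 2 ^ 10"
    using KR_col_bounds a b by auto
  ultimately have "KR_col a = KR_col b"
    using inj_on_bin_vec by (blast dest: inj_onD)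
  then show "a = b"
    using inj_on_KR_col a b by (blast dest: inj_onD)
qed

lemma H_KR_nonzero:
  assumes "a \<in> {1..51}"
  shows "H_KR a \<noteq> bzero"
proof
  assume "H_KR a = bzero"
  then have "bin_vec 10 (KR_col a) = bin_vec 10 0"
    using assms by (simp add: H_KR_eq_bin_vec bin_vec_0)
  moreover have "0 < KR_col a \<and> KR_col a < 2 ^ 10"
    using KR_col_bounds assms by auto
  ultimately show False
    using inj_on_bin_vec[of 10] by (auto dest: inj_onD)
qed

lemma colsum_H_KR_5_27_29: "colsum H_KR {5, 27, 29} = bzero"
proof -
  have "colsum H_KR (set [5, 27, 29]) = bin_vec 10 (foldr (\<lambda>a. xor (KR_col a)) [5, 27, 29] 0)"
    by (rule colsum_set_eq_bin_vec) (auto simp: H_KR_eq_bin_vec)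
  then show ?thesis
    by (simp add: KR_col_def M_KR_def bin_vec_0)
qed

lemma is_partition_P_KR: "is_partition P_KR {1..51}"
  unfolding is_partition_def
proof (intro conjI)
  show "\<forall>B\<in>P_KR. B \<noteq> {}" "\<forall>B\<in>P_KR. \<forall>C\<in>P_KR. B \<noteq> C \<longrightarrow> B \<inter> C = {}"
    by (simp_all add: P_KR_def)
  have "list_all (\<lambda>a. a \<in> \<Union>P_KR) [1..<52]"
    by (simp add: P_KR_def upt_rec)
  then have "{1..51} \<subseteq> \<Union>P_KR"
    by (auto simp: list_all_iff)
  moreover have "\<Union>P_KR \<subseteq> {1..51}"
    by (simp add: P_KR_def)
  ultimately show "\<Union>P_KR = {1..51}"
    by blast
qed

definition KR_block_min :: "nat \<Rightarrow> nat" where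
  "KR_block_min a =
    [1, 2, 3, 2, 5, 6, 1, 6, 9, 10, 10, 6, 5, 14, 10, 10, 17,
     2, 1, 20, 17, 9, 9, 14, 1, 6, 20, 6, 3, 9, 17, 10, 3, 1,
     6, 36, 17, 36, 3, 36, 3, 10, 5, 6, 1, 17, 17, 3, 14, 14, 3] ! (a - 1)"

lemma KR_block_min_same_block: "same_block P_KR a b \<Longrightarrow> KR_block_min a = KR_block_min b"
proof -
  have "\<forall>B\<in>P_KR. \<forall>x\<in>B. KR_block_min x = Min B"
    by (simp add: P_KR_def KR_block_min_def)
  then show "same_block P_KR a b \<Longrightarrow> KR_block_min a = KR_block_min b"
    by (auto simp: same_block_def)
qed

text \<open>The table is split into pieces of 64 entries because simplifying a literal list takes
  time quadratic in its length.\<close>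

definition KR_witnesses_0 :: "nat list list" where
  "KR_witnesses_0 =
    [[], [10], [9], [9, 10], [8], [8, 10], [8, 9], [7, 31],
     [7], [7, 10], [7, 9], [8, 31], [7, 8], [9, 31], [10, 31], [31],
     [6], [6, 10], [6, 9], [21, 45], [5, 35], [11, 26], [4, 30], [30, 32],
     [6, 7], [33, 47], [42, 46], [20, 37], [5, 19], [2, 25], [22, 38], [6, 31],
     [5], [5, 10], [5, 9], [16, 51], [5, 8], [11, 12], [33, 50], [21, 34],
     [5, 7], [2, 40], [22, 36], [24, 47], [6, 19], [3, 46], [17, 18], [1, 21],
     [5, 6], [11, 14], [24, 33], [19, 31], [35], [10, 35], [9, 35], [3, 42],
     [8, 19], [39, 43], [13, 15], [17, 48], [19], [10, 19], [9, 19], [47, 50]]"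

definition KR_witnesses_1 :: "nat list list" where
  "KR_witnesses_1 =
    [[4], [32], [4, 9], [9, 32], [4, 8], [8, 32], [6, 30], [17, 40],
     [4, 7], [7, 32], [33, 38], [13, 14], [24, 36], [22, 47], [31, 32], [4, 31],
     [4, 6], [6, 32], [8, 30], [38, 47], [1, 29], [2, 48], [30], [10, 30],
     [36, 50], [30, 31], [16, 46], [21, 27], [29, 34], [18, 25], [7, 30], [12, 13],
     [4, 5], [5, 32], [30, 35], [42, 51], [20, 28], [12, 15], [22, 24], [36, 47],
     [29, 45], [18, 40], [19, 30], [37, 49], [38, 50], [23, 43], [2, 17], [13, 26],
     [20, 49], [14, 15], [22, 50], [17, 25], [1, 27], [32, 35], [5, 30], [3, 16],
     [24, 38], [46, 51], [11, 13], [21, 29], [4, 19], [19, 32], [33, 36], [28, 37]]"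

definition KR_witnesses_2 :: "nat list list" where
  "KR_witnesses_2 =
    [[3], [3, 10], [3, 9], [35, 42], [3, 8], [34, 37], [27, 28], [2, 14],
     [3, 7], [24, 43], [26, 40], [19, 42], [13, 18], [1, 37], [12, 25], [3, 31],
     [3, 6], [19, 46], [27, 49], [2, 12], [4, 51], [32, 51], [1, 20], [5, 42],
     [15, 17], [13, 48], [14, 25], [39, 47], [23, 38], [43, 50], [20, 34], [11, 40],
     [3, 5], [16, 30], [13, 17], [2, 26], [39, 50], [7, 46], [28, 29], [6, 42],
     [23, 36], [8, 46], [20, 45], [11, 25], [10, 46], [46], [14, 40], [9, 46],
     [24, 39], [37, 45], [24, 41], [8, 42], [3, 35], [9, 42], [2, 11], [42],
     [31, 42], [20, 21], [12, 40], [33, 43], [3, 19], [6, 46], [25, 26], [7, 42]]"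

definition KR_witnesses_3 :: "nat list list" where
  "KR_witnesses_3 =
    [[3, 4], [3, 32], [20, 29], [16, 35], [6, 51], [36, 43], [12, 48], [14, 18],
     [38, 39], [21, 49], [38, 41], [16, 19], [2, 13], [17, 26], [28, 45], [23, 47],
     [8, 51], [13, 25], [14, 48], [12, 18], [51], [10, 51], [3, 30], [5, 16],
     [11, 17], [29, 37], [45, 49], [31, 51], [7, 51], [21, 28], [44, 45], [15, 40],
     [35, 51], [30, 42], [1, 44], [11, 48], [23, 24], [13, 40], [1, 49], [6, 16],
     [19, 51], [14, 17], [34, 44], [15, 25], [32, 46], [4, 46], [34, 49], [22, 43],
     [23, 50], [38, 43], [1, 28], [8, 16], [5, 51], [9, 16], [2, 15], [16],
     [16, 31], [27, 37], [28, 34], [30, 46], [36, 39], [12, 17], [36, 41], [7, 16]]"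

definition KR_witnesses_4 :: "nat list list" where
  "KR_witnesses_4 =
    [[2], [2, 10], [2, 9], [1, 22], [2, 8], [27, 50], [21, 36], [3, 14],
     [2, 7], [5, 40], [43, 49], [22, 34], [23, 37], [6, 25], [26, 46], [2, 31],
     [2, 6], [24, 27], [25, 31], [3, 12], [26, 42], [4, 48], [18, 30], [20, 23],
     [13, 51], [8, 25], [29, 47], [11, 46], [10, 25], [25], [28, 43], [9, 25],
     [2, 5], [7, 40], [15, 51], [3, 26], [12, 42], [28, 41], [31, 40], [28, 39],
     [10, 40], [40], [14, 46], [9, 40], [21, 22], [8, 40], [4, 17], [17, 32],
     [14, 42], [24, 29], [21, 38], [39, 49], [2, 35], [41, 44], [3, 11], [39, 44],
     [17, 30], [6, 40], [27, 47], [13, 16], [2, 19], [5, 25], [12, 46], [22, 45]]"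

definition KR_witnesses_5 :: "nat list list" where
  "KR_witnesses_5 =
    [[18], [2, 32], [9, 18], [20, 39], [8, 18], [6, 48], [34, 47], [12, 51],
     [7, 18], [29, 38], [21, 24], [25, 30], [3, 13], [45, 50], [1, 47], [18, 31],
     [6, 18], [8, 48], [17, 19], [14, 51], [10, 48], [48], [2, 30], [1, 33],
     [37, 39], [24, 45], [17, 35], [15, 46], [25, 32], [4, 25], [21, 50], [33, 34],
     [5, 18], [13, 46], [11, 51], [23, 44], [12, 16], [1, 24], [7, 17], [23, 49],
     [32, 40], [4, 40], [8, 17], [33, 45], [9, 17], [24, 34], [17], [10, 17],
     [14, 16], [1, 50], [45, 47], [23, 28], [18, 35], [5, 48], [3, 15], [22, 27],
     [21, 33], [34, 50], [20, 43], [13, 42], [18, 19], [29, 36], [6, 17], [30, 40]]"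

definition KR_witnesses_6 :: "nat list list" where
  "KR_witnesses_6 =
    [[2, 3], [1, 23], [11, 35], [5, 26], [40, 46], [9, 14], [10, 14], [14],
     [14, 31], [23, 34], [11, 19], [20, 38], [4, 13], [13, 32], [22, 37], [7, 14],
     [37, 38], [9, 12], [10, 12], [12], [18, 51], [20, 22], [5, 11], [6, 14],
     [27, 43], [16, 17], [13, 30], [7, 12], [12, 31], [3, 25], [40, 42], [19, 26],
     [15, 30], [9, 26], [10, 26], [26], [36, 37], [28, 33], [6, 11], [5, 14],
     [47, 49], [3, 40], [25, 42], [7, 26], [26, 31], [2, 46], [21, 23], [12, 19],
     [25, 46], [33, 49], [8, 11], [5, 12], [9, 11], [33, 44], [11], [2, 42],
     [29, 43], [11, 31], [17, 51], [14, 19], [28, 47], [23, 45], [7, 11], [20, 36]]"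

definition KR_witnesses_7 :: "nat list list" where
  "KR_witnesses_7 =
    [[3, 18], [20, 33], [15, 35], [13, 31], [7, 13], [12, 30], [14, 32], [4, 14],
     [8, 13], [25, 51], [15, 19], [36, 44], [13], [10, 13], [9, 13], [36, 49],
     [43, 45], [14, 30], [12, 32], [4, 12], [2, 51], [1, 39], [5, 15], [1, 41],
     [20, 47], [17, 42], [33, 37], [28, 36], [6, 13], [34, 39], [16, 40], [34, 41],
     [11, 30], [22, 44], [26, 32], [4, 26], [34, 43], [22, 49], [6, 15], [20, 50],
     [24, 37], [39, 45], [16, 25], [41, 45], [1, 43], [18, 46], [3, 17], [28, 38],
     [13, 19], [22, 28], [8, 15], [20, 24], [9, 15], [23, 27], [15], [2, 16],
     [13, 35], [15, 31], [21, 39], [38, 49], [37, 50], [40, 51], [7, 15], [38, 44]]"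

definition KR_witnesses_8 :: "nat list list" where
  "KR_witnesses_8 =
    [[1], [1, 10], [1, 9], [2, 22], [1, 8], [16, 28], [14, 23], [31, 34],
     [34], [10, 34], [9, 34], [17, 24], [8, 34], [3, 37], [18, 47], [1, 31],
     [1, 6], [16, 49], [12, 23], [19, 21], [4, 29], [16, 44], [3, 20], [18, 33],
     [6, 34], [13, 39], [15, 43], [13, 41], [5, 45], [2, 38], [22, 25], [17, 50],
     [1, 5], [15, 41], [23, 26], [15, 39], [48, 50], [18, 24], [28, 51], [7, 21],
     [5, 34], [2, 36], [22, 40], [8, 21], [6, 45], [9, 21], [10, 21], [21],
     [24, 48], [18, 50], [49, 51], [31, 45], [1, 35], [27, 32], [44, 51], [11, 23],
     [8, 45], [17, 33], [37, 42], [20, 46], [45], [10, 45], [9, 45], [6, 21]]"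

definition KR_witnesses_9 :: "nat list list" where
  "KR_witnesses_9 =
    [[1, 4], [1, 32], [20, 51], [18, 22], [6, 29], [28, 42], [12, 39], [17, 36],
     [4, 34], [32, 34], [25, 33], [46, 49], [24, 40], [13, 23], [2, 47], [26, 43],
     [8, 29], [42, 49], [14, 39], [25, 47], [29], [10, 29], [1, 30], [2, 33],
     [40, 50], [37, 51], [11, 43], [29, 31], [7, 29], [18, 38], [30, 34], [28, 46],
     [29, 35], [11, 41], [3, 44], [11, 39], [6, 27], [2, 24], [3, 49], [40, 47],
     [19, 29], [18, 36], [30, 45], [14, 43], [25, 50], [17, 22], [21, 32], [4, 21],
     [8, 27], [2, 50], [3, 28], [17, 38], [27], [10, 27], [9, 27], [15, 23],
     [24, 25], [21, 30], [16, 37], [27, 31], [4, 45], [32, 45], [33, 40], [12, 43]]"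

definition KR_witnesses_10 :: "nat list list" where
  "KR_witnesses_10 =
    [[1, 3], [2, 23], [13, 47], [16, 27], [14, 22], [7, 37], [6, 20], [15, 50],
     [3, 34], [8, 37], [26, 36], [42, 45], [10, 37], [37], [12, 38], [9, 37],
     [12, 22], [45, 46], [8, 20], [15, 24], [9, 20], [18, 39], [20], [10, 20],
     [21, 42], [20, 31], [14, 38], [13, 33], [23, 25], [6, 37], [7, 20], [11, 36],
     [22, 26], [15, 33], [4, 44], [16, 29], [28, 30], [34, 46], [4, 49], [32, 49],
     [23, 40], [13, 24], [19, 20], [11, 38], [18, 43], [1, 46], [14, 36], [3, 21],
     [30, 49], [19, 37], [4, 28], [28, 32], [30, 44], [11, 22], [5, 20], [1, 42],
     [15, 47], [17, 41], [12, 36], [17, 39], [3, 45], [13, 50], [26, 38], [34, 42]]"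

definition KR_witnesses_11 :: "nat list list" where
  "KR_witnesses_11 =
    [[20, 30], [18, 23], [5, 44], [27, 42], [12, 33], [40, 43], [5, 49], [11, 50],
     [25, 39], [14, 47], [25, 41], [16, 45], [32, 37], [4, 37], [19, 28], [13, 22],
     [14, 33], [13, 38], [5, 28], [11, 24], [1, 51], [2, 39], [4, 20], [2, 41],
     [16, 21], [27, 46], [19, 49], [30, 37], [34, 51], [12, 47], [19, 44], [15, 36],
     [9, 44], [11, 33], [44], [10, 44], [9, 49], [13, 36], [49], [10, 49],
     [45, 51], [31, 49], [7, 44], [15, 38], [2, 43], [26, 47], [7, 49], [17, 23],
     [9, 28], [25, 43], [28], [10, 28], [3, 27], [15, 22], [6, 49], [1, 16],
     [11, 47], [29, 46], [7, 28], [21, 51], [39, 40], [28, 31], [40, 41], [16, 34]]"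

definition KR_witnesses_12 :: "nat list list" where
  "KR_witnesses_12 =
    [[1, 2], [3, 23], [10, 22], [22], [15, 28], [12, 20], [21, 40], [8, 22],
     [2, 34], [5, 36], [14, 37], [7, 22], [22, 31], [6, 38], [4, 47], [32, 47],
     [15, 49], [14, 20], [31, 38], [6, 22], [15, 44], [7, 38], [32, 33], [4, 33],
     [30, 47], [8, 38], [17, 27], [16, 43], [10, 38], [38], [12, 37], [9, 38],
     [11, 20], [7, 36], [16, 39], [5, 22], [24, 32], [4, 24], [31, 36], [30, 50],
     [10, 36], [36], [13, 49], [9, 36], [23, 46], [8, 36], [13, 44], [2, 21],
     [32, 50], [4, 50], [21, 25], [24, 30], [18, 27], [20, 26], [23, 42], [22, 35],
     [43, 51], [6, 36], [17, 29], [11, 37], [2, 45], [5, 38], [13, 28], [19, 22]]"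

definition KR_witnesses_13 :: "nat list list" where
  "KR_witnesses_13 =
    [[1, 18], [13, 37], [22, 32], [4, 22], [11, 28], [5, 24], [7, 47], [6, 33],
     [18, 34], [25, 29], [8, 47], [30, 38], [9, 47], [19, 50], [47], [10, 47],
     [11, 49], [5, 50], [17, 45], [8, 33], [2, 29], [1, 48], [10, 33], [33],
     [31, 33], [19, 24], [13, 20], [42, 43], [32, 38], [4, 38], [6, 47], [7, 33],
     [15, 20], [6, 50], [39, 42], [33, 35], [10, 24], [24], [17, 34], [9, 24],
     [32, 36], [4, 36], [24, 31], [19, 33], [3, 43], [7, 24], [1, 17], [18, 21],
     [10, 50], [50], [19, 47], [9, 50], [2, 27], [6, 24], [16, 23], [5, 33],
     [39, 46], [7, 50], [21, 48], [15, 37], [18, 45], [29, 40], [31, 50], [30, 36]]"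

definition KR_witnesses_14 :: "nat list list" where
  "KR_witnesses_14 =
    [[10, 23], [23], [15, 27], [3, 22], [36, 46], [8, 23], [16, 50], [1, 14],
     [17, 49], [7, 23], [11, 45], [20, 25], [17, 44], [2, 37], [23, 31], [14, 34],
     [25, 37], [6, 23], [16, 24], [1, 12], [32, 39], [4, 39], [2, 20], [4, 41],
     [13, 29], [11, 21], [47, 51], [12, 34], [17, 28], [3, 38], [36, 42], [26, 45],
     [16, 33], [5, 23], [15, 29], [1, 26], [37, 40], [50, 51], [18, 49], [28, 48],
     [14, 21], [3, 36], [38, 42], [26, 34], [4, 43], [32, 43], [22, 46], [12, 45],
     [38, 46], [24, 51], [18, 28], [48, 49], [22, 42], [23, 35], [1, 11], [44, 48],
     [13, 27], [16, 47], [30, 43], [14, 45], [12, 21], [19, 23], [11, 34], [20, 40]]"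

definition KR_witnesses_15 :: "nat list list" where
  "KR_witnesses_15 =
    [[23, 32], [4, 23], [11, 27], [20, 48], [13, 34], [6, 39], [42, 50], [6, 41],
     [24, 46], [38, 51], [15, 45], [40, 44], [1, 13], [18, 37], [3, 47], [40, 49],
     [19, 43], [8, 39], [24, 42], [8, 41], [10, 39], [39], [10, 41], [41],
     [31, 41], [15, 21], [31, 39], [28, 40], [46, 50], [7, 39], [16, 36], [7, 41],
     [33, 42], [35, 39], [2, 44], [13, 21], [7, 43], [3, 24], [2, 49], [12, 27],
     [8, 43], [19, 39], [16, 38], [19, 41], [43], [10, 43], [9, 43], [25, 28],
     [13, 45], [3, 50], [2, 28], [14, 27], [16, 22], [5, 39], [1, 15], [5, 41],
     [17, 20], [42, 47], [33, 46], [25, 49], [6, 43], [36, 51], [15, 34], [25, 44]]"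

abbreviation KR_witness :: "nat \<Rightarrow> nat list \<Rightarrow> bool" where
  "KR_witness \<equiv> partition_witness 51 KR_col KR_block_min"

lemma KR_witnesses_0_correct: "witnesses_for_range KR_witness 0 64 KR_witnesses_0"
  by (simp add: KR_witnesses_0_def partition_witness_def KR_col_def M_KR_def KR_block_min_def)

lemma KR_witnesses_1_correct: "witnesses_for_range KR_witness 64 128 KR_witnesses_1"
  by (simp add: KR_witnesses_1_def partition_witness_def KR_col_def M_KR_def KR_block_min_def)

lemma KR_witnesses_2_correct: "witnesses_for_range KR_witness 128 192 KR_witnesses_2"
  by (simp add: KR_witnesses_2_def partition_witness_def KR_col_def M_KR_def KR_block_min_def)

lemma KR_witnesses_3_correct: "witnesses_for_range KR_witness 192 256 KR_witnesses_3"
  by (simp add: KR_witnesses_3_def partition_witness_def KR_col_def M_KR_def KR_block_min_def)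

lemma KR_witnesses_4_correct: "witnesses_for_range KR_witness 256 320 KR_witnesses_4"
  by (simp add: KR_witnesses_4_def partition_witness_def KR_col_def M_KR_def KR_block_min_def)

lemma KR_witnesses_5_correct: "witnesses_for_range KR_witness 320 384 KR_witnesses_5"
  by (simp add: KR_witnesses_5_def partition_witness_def KR_col_def M_KR_def KR_block_min_def)

lemma KR_witnesses_6_correct: "witnesses_for_range KR_witness 384 448 KR_witnesses_6"
  by (simp add: KR_witnesses_6_def partition_witness_def KR_col_def M_KR_def KR_block_min_def)

lemma KR_witnesses_7_correct: "witnesses_for_range KR_witness 448 512 KR_witnesses_7"
  by (simp add: KR_witnesses_7_def partition_witness_def KR_col_def M_KR_def KR_block_min_def)

lemma KR_witnesses_8_correct: "witnesses_for_range KR_witness 512 576 KR_witnesses_8"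
  by (simp add: KR_witnesses_8_def partition_witness_def KR_col_def M_KR_def KR_block_min_def)

lemma KR_witnesses_9_correct: "witnesses_for_range KR_witness 576 640 KR_witnesses_9"
  by (simp add: KR_witnesses_9_def partition_witness_def KR_col_def M_KR_def KR_block_min_def)

lemma KR_witnesses_10_correct: "witnesses_for_range KR_witness 640 704 KR_witnesses_10"
  by (simp add: KR_witnesses_10_def partition_witness_def KR_col_def M_KR_def KR_block_min_def)

lemma KR_witnesses_11_correct: "witnesses_for_range KR_witness 704 768 KR_witnesses_11"
  by (simp add: KR_witnesses_11_def partition_witness_def KR_col_def M_KR_def KR_block_min_def)

lemma KR_witnesses_12_correct: "witnesses_for_range KR_witness 768 832 KR_witnesses_12"
  by (simp add: KR_witnesses_12_def partition_witness_def KR_col_def M_KR_def KR_block_min_def)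

lemma KR_witnesses_13_correct: "witnesses_for_range KR_witness 832 896 KR_witnesses_13"
  by (simp add: KR_witnesses_13_def partition_witness_def KR_col_def M_KR_def KR_block_min_def)

lemma KR_witnesses_14_correct: "witnesses_for_range KR_witness 896 960 KR_witnesses_14"
  by (simp add: KR_witnesses_14_def partition_witness_def KR_col_def M_KR_def KR_block_min_def)

lemma KR_witnesses_15_correct: "witnesses_for_range KR_witness 960 1024 KR_witnesses_15"
  by (simp add: KR_witnesses_15_def partition_witness_def KR_col_def M_KR_def KR_block_min_def)

definition KR_witnesses :: "nat list list" where
  "KR_witnesses =
     KR_witnesses_0 @ KR_witnesses_1 @ KR_witnesses_2 @ KR_witnesses_3 @
     KR_witnesses_4 @ KR_witnesses_5 @ KR_witnesses_6 @ KR_witnesses_7 @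
     KR_witnesses_8 @ KR_witnesses_9 @ KR_witnesses_10 @ KR_witnesses_11 @
     KR_witnesses_12 @ KR_witnesses_13 @ KR_witnesses_14 @ KR_witnesses_15"

lemma KR_witnesses_correct: "witnesses_for_range KR_witness 0 1024 KR_witnesses"
  unfolding KR_witnesses_def
  by (rule witnesses_for_range_append
      KR_witnesses_0_correct KR_witnesses_1_correct KR_witnesses_2_correct
      KR_witnesses_3_correct KR_witnesses_4_correct KR_witnesses_5_correct
      KR_witnesses_6_correct KR_witnesses_7_correct KR_witnesses_8_correct
      KR_witnesses_9_correct KR_witnesses_10_correct KR_witnesses_11_correct
      KR_witnesses_12_correct KR_witnesses_13_correct KR_witnesses_14_correct
      KR_witnesses_15_correct)+

lemma KR_witness_exists: "m < 2 ^ 10 \<Longrightarrow> \<exists>ws. KR_witness m ws"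
  using KR_witnesses_correct by (auto dest: witnesses_for_range_exists)

theorem theorem5p2:
  shows "two_partition 10 51 H_KR P_KR \<and>
         min_distance 51 H_KR = 3 \<and>
         colsum H_KR {5, 27, 29} = bzero \<and>
         \<not> same_block P_KR 5 27 \<and> \<not> same_block P_KR 5 29 \<and> \<not> same_block P_KR 27 29"
proof (intro conjI)
  show "two_partition 10 51 H_KR P_KR"
    by (rule two_partition_from_witnesses[OF is_partition_P_KR H_KR_eq_bin_vec
          KR_block_min_same_block KR_witness_exists])
  show "min_distance 51 H_KR = 3"
    by (rule min_distance_eq_3[OF inj_on_H_KR H_KR_nonzero _ _ colsum_H_KR_5_27_29]) auto
  show "colsum H_KR {5, 27, 29} = bzero"
    by (rule colsum_H_KR_5_27_29)
  show "\<not> same_block P_KR 5 27" "\<not> same_block P_KR 5 29" "\<not> same_block P_KR 27 29"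
    by (simp_all add: same_block_def P_KR_def)
qed

end
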